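(* Let $M\ge 2$ and let $L^{(1)},\dots,L^{(M)}$ and $L=\sum_{l=1}^{M}L^{(l)}$ be the $N^{(1)}\times N^{(1)}$ matrices of a hierarchical system as described in the context. Then \[ \lambda(L)=\{0\}\cup\big(\lambda(L^{(1)})\setminus\{0\}\big)\cup\cdots\cup\big(\lambda(L^{(M)})\setminus\{0\}\big), \] and among all the eigenvalues of $L$ (the $N^{(1)}$ eigenvalues counted with algebraic multiplicity) exactly one equals $0$.
   Context: Hierarchical structure. Fix an integer $M\ge 2$ (number of layers) and positive integers $N^{(1)},\dots,N^{(M)}$; set $N^{(M+1)}:=1$. For each $l\in\{1,\dots,M\}$ the $N^{(l)}$ nodes of layer $l$ are partitioned into $N^{(l+1)}$ groups $G^{(l)}_1,\dots,G^{(l)}_{N^{(l+1)}}$ of sizes $k^{(l)}_p\ge 1$ (so $\sum_p k^{(l)}_p=N^{(l)}$), numbered consecutively: group $G^{(l)}_p$ consists of the nodes $\sum_{m<p}k^{(l)}_m+1,\dots,\sum_{m\le p}k^{(l)}_m$ of layer $l$. For $l\le M-1$, group $G^{(l)}_p$ is the subordinate group of node $p$ of layer $l+1$. Each group $G^{(l)}_p$ carries a connected undirected graph with binary (0/1) adjacency matrix; $L^{(l)}_p\in\mathbb{R}^{k^{(l)}_p\times k^{(l)}_p}$ is its Laplacian (diagonal degree matrix minus adjacency matrix), and $L^{(l)}_D=\mathrm{diag}(L^{(l)}_1,\dots,L^{(l)}_{N^{(l+1)}})\in\mathbb{R}^{N^{(l)}\times N^{(l)}}$ (block diagonal). Weights: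 fix positive constants $a_1,\dots,a_{N^{(1)}}$; set $a^{(1)}_i=a_i$ and recursively $a^{(l+1)}_p=\sum_{i\in G^{(l)}_p}a^{(l)}_i$. Let $K^{(l)}=\mathrm{diag}(a^{(l)}_1,\dots,a^{(l)}_{N^{(l)}})^{-1}$. For $l=1,\dots,M-1$: $B^{(l)}=\mathrm{diag}(\mathbf{1}_{k^{(l)}_1},\dots,\mathbf{1}_{k^{(l)}_{N^{(l+1)}}})\in\mathbb{R}^{N^{(l)}\times N^{(l+1)}}$ (block diagonal, $\mathbf{1}_k$ the all-ones column vector of length $k$), and $C^{(l)}=\mathrm{diag}(C^{(l)}_1,\dots,C^{(l)}_{N^{(l+1)}})\in\mathbb{R}^{N^{(l+1)}\times N^{(l)}}$ (block diagonal), where each $C^{(l)}_p\in\mathbb{R}^{1\times k^{(l)}_p}$ is a row vector with nonnegative entries summing to $1$. Define $L^{(1)}=K^{(1)}L^{(1)}_D$ and, for $l=2,\dots,M$, $L^{(l)}=B^{(1)}B^{(2)}\cdots B^{(l-1)}\,K^{(l)}L^{(l)}_D\,C^{(l-1)}\cdots C^{(2)}C^{(1)}$; all are $N^{(1)}\times N^{(1)}$. $\lambda(A)$ denotes the set of eigenvalues of a square matrix $A$. *)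

theory Defs
  imports "Jordan_Normal_Form.Char_Poly"
begin

text \<open>Layers are numbered 1..M, nodes of layer l are 0..<N l (0-based),
  groups of layer l are numbered 0..<N (l+1).  k l p is the size of group p of layer l.\<close>

definition grp :: "(nat \<Rightarrow> nat \<Rightarrow> nat) \<Rightarrow> nat \<Rightarrow> nat \<Rightarrow> nat set" where
  "grp k l p = {(\<Sum>m<p. k l m) ..< (\<Sum>m<Suc p. k l m)}"

fun wt :: "(nat \<Rightarrow> nat \<Rightarrow> nat) \<Rightarrow> (nat \<Rightarrow> real) \<Rightarrow> nat \<Rightarrow> nat \<Rightarrow> real" where
  "wt k a 0 i = a i"
| "wt k a (Suc 0) i = a i"
| "wt k a (Suc (Suc l)) p = (\<Sum>i\<in>grp k (Suc l) p. wt k a (Suc l) i)"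

definition LapD :: "(nat \<Rightarrow> nat) \<Rightarrow> (nat \<Rightarrow> nat \<Rightarrow> nat \<Rightarrow> bool) \<Rightarrow> nat \<Rightarrow> real mat" where
  "LapD N adj l = mat (N l) (N l) (\<lambda>(i,j).
     if i = j then real (card {q. q < N l \<and> adj l i q}) else if adj l i j then -1 else 0)"

definition Kmat :: "(nat \<Rightarrow> nat) \<Rightarrow> (nat \<Rightarrow> nat \<Rightarrow> nat) \<Rightarrow> (nat \<Rightarrow> real) \<Rightarrow> nat \<Rightarrow> real mat" where
  "Kmat N k a l = mat (N l) (N l) (\<lambda>(i,j). if i = j then 1 / wt k a l i else 0)"

definition Bmat :: "(nat \<Rightarrow> nat) \<Rightarrow> (nat \<Rightarrow> nat \<Rightarrow> nat) \<Rightarrow> nat \<Rightarrow> real mat" where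
  "Bmat N k l = mat (N l) (N (Suc l)) (\<lambda>(i,p). if i \<in> grp k l p then 1 else 0)"

definition Cmat :: "(nat \<Rightarrow> nat) \<Rightarrow> (nat \<Rightarrow> nat \<Rightarrow> nat) \<Rightarrow> (nat \<Rightarrow> nat \<Rightarrow> real) \<Rightarrow> nat \<Rightarrow> real mat" where
  "Cmat N k c l = mat (N (Suc l)) (N l) (\<lambda>(p,i). if i \<in> grp k l p then c l i else 0)"

text \<open>Bprod l = B^(1) ... B^(l-1)  (N1 x N l);  Cprod l = C^(l-1) ... C^(1) (N l x N1)\<close>
fun Bprod :: "(nat \<Rightarrow> nat) \<Rightarrow> (nat \<Rightarrow> nat \<Rightarrow> nat) \<Rightarrow> nat \<Rightarrow> real mat" where
  "Bprod N k 0 = 1\<^sub>m (N 1)"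
| "Bprod N k (Suc 0) = 1\<^sub>m (N 1)"
| "Bprod N k (Suc (Suc l)) = Bprod N k (Suc l) * Bmat N k (Suc l)"

fun Cprod :: "(nat \<Rightarrow> nat) \<Rightarrow> (nat \<Rightarrow> nat \<Rightarrow> nat) \<Rightarrow> (nat \<Rightarrow> nat \<Rightarrow> real) \<Rightarrow> nat \<Rightarrow> real mat" where
  "Cprod N k c 0 = 1\<^sub>m (N 1)"
| "Cprod N k c (Suc 0) = 1\<^sub>m (N 1)"
| "Cprod N k c (Suc (Suc l)) = Cmat N k c (Suc l) * Cprod N k c (Suc l)"

text \<open>L^(l) for l \<ge> 1 (for l = 1 this is K^(1) L_D^(1))\<close>
definition Lmat :: "(nat \<Rightarrow> nat) \<Rightarrow> (nat \<Rightarrow> nat \<Rightarrow> nat) \<Rightarrow> (nat \<Rightarrow> nat \<Rightarrow> nat \<Rightarrow> bool)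
    \<Rightarrow> (nat \<Rightarrow> real) \<Rightarrow> (nat \<Rightarrow> nat \<Rightarrow> real) \<Rightarrow> nat \<Rightarrow> real mat" where
  "Lmat N k adj a c l = Bprod N k l * (Kmat N k a l * LapD N adj l) * Cprod N k c l"

definition Ltot :: "(nat \<Rightarrow> nat) \<Rightarrow> (nat \<Rightarrow> nat \<Rightarrow> nat) \<Rightarrow> (nat \<Rightarrow> nat \<Rightarrow> nat \<Rightarrow> bool)
    \<Rightarrow> (nat \<Rightarrow> real) \<Rightarrow> (nat \<Rightarrow> nat \<Rightarrow> real) \<Rightarrow> nat \<Rightarrow> real mat" where
  "Ltot N k adj a c M = mat (N 1) (N 1) (\<lambda>ij. \<Sum>l=1..M. Lmat N k adj a c l $$ ij)"

definition eigs :: "real mat \<Rightarrow> complex set" where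
  "eigs A = {z. eigenvalue (map_mat complex_of_real A) z}"

definition alg_mult :: "real mat \<Rightarrow> complex \<Rightarrow> nat" where
  "alg_mult A z = order z (char_poly (map_mat complex_of_real A))"

end

theory Submission
  imports Defs
begin

text \<open>Put T_M = K^(M) L_D^(M) and T_l = K^(l) L_D^(l) + B^(l) T_(l+1) C^(l) for l < M. Then
  B^(1)...B^(l-1) T_l C^(l-1)...C^(1) = L^(l) + ... + L^(M), in particular L = T_1. Two identities
  drive the argument: C^(l) B^(l) = I, because each C^(l)_p sums to 1, and L_D^(l) B^(l) = 0, because
  a graph Laplacian kills constants. They make the range of B^(l) invariant under T_l, which acts on
  it as T_(l+1) and on the quotient as K^(l) L_D^(l). Hence the nonzero eigenvalues of T_l are those
  of K^(l) L_D^(l) together with those of T_(l+1); the same reasoning shows that L^(l) and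
  K^(l) L_D^(l) have the same nonzero eigenvalues.

  For the eigenvalue 0: as the groups are connected and the weights positive, K^(l) L_D^(l) y can only
  lie in the range of B^(l) if y does. Inductively, the all-ones vector spans the kernel of T_l^2,
  so 0 is a simple root of the characteristic polynomial of L.\<close>

lemma eigenvalue_iff_eigenvector:
  assumes "A \<in> carrier_mat n n"
  shows "eigenvalue A \<mu> \<longleftrightarrow> (\<exists>v\<in>carrier_vec n. v \<noteq> 0\<^sub>v n \<and> A *\<^sub>v v = \<mu> \<cdot>\<^sub>v v)"
  using assms unfolding eigenvalue_def eigenvector_def by auto

lemma vec_eq_0_if_smult_eq_0:
  fixes v :: "'a::field vec"
  assumes "\<mu> \<noteq> 0" and "v \<in> carrier_vec n" and "\<mu> \<cdot>\<^sub>v v = 0\<^sub>v n"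
  shows "v = 0\<^sub>v n"
proof (rule eq_vecI)
  fix i assume "i < dim_vec (0\<^sub>v n)"
  then have "\<mu> * v $ i = 0" using arg_cong[OF assms(3), of "\<lambda>x. x $ i"] assms(2) by simp
  then show "v $ i = 0\<^sub>v n $ i" using assms(1) \<open>i < dim_vec (0\<^sub>v n)\<close> by simp
qed (use assms(2) in simp)

lemma mult_mat_vec_zero[simp]: "A \<in> carrier_mat nr n \<Longrightarrow> A *\<^sub>v 0\<^sub>v n = 0\<^sub>v nr"
  by (rule eq_vecI) auto

lemma zero_mat_mult_vec[simp]: "w \<in> carrier_vec m \<Longrightarrow> 0\<^sub>m n m *\<^sub>v w = 0\<^sub>v n"
  by (rule eq_vecI) (auto simp: scalar_prod_def)

lemma vec_eq_minus_if_add_eq: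
  fixes a :: "'a::ab_group_add vec"
  assumes "a \<in> carrier_vec n" "b \<in> carrier_vec n" "a + b = c"
  shows "a = c - b"
proof (rule eq_vecI)
  fix i assume "i < dim_vec (c - b)"
  then show "a $ i = (c - b) $ i" using assms arg_cong[OF assms(3), of "\<lambda>v. v $ i"] by auto
qed (use assms in auto)

lemma vec_eq_if_minus_eq_0:
  fixes a :: "'a::ab_group_add vec"
  assumes "a \<in> carrier_vec n" "b \<in> carrier_vec n" "a - b = 0\<^sub>v n"
  shows "a = b"
proof (rule eq_vecI)
  fix i assume i: "i < dim_vec b"
  have "(a - b) $ i = 0" using assms(2,3) i by simp
  then show "a $ i = b $ i" using assms(2) i by simp
qed (use assms in auto)

lemma add_mult_distrib_mat_sandwich:
  assumes P: "P \<in> carrier_mat n m" and X: "X \<in> carrier_mat m m" and Y: "Y \<in> carrier_mat m m"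
    and Q: "Q \<in> carrier_mat m n"
  shows "P * (X + Y) * Q = P * X * Q + P * Y * Q"
proof -
  have "P * (X + Y) = P * X + P * Y" using P X Y by (rule mult_add_distrib_mat)
  then show ?thesis using P X Y Q by (simp add: add_mult_distrib_mat[of _ n m])
qed

lemma assoc_mult_mat_sandwich:
  assumes P: "P \<in> carrier_mat n m" and B: "B \<in> carrier_mat m r" and T: "T \<in> carrier_mat r r"
    and C: "C \<in> carrier_mat r m" and Q: "Q \<in> carrier_mat m n"
  shows "(P * B) * T * (C * Q) = P * (B * T * C) * Q"
proof -
  have "(P * B) * T * (C * Q) = (P * B) * (T * (C * Q))"
    using assms by (intro assoc_mult_mat[of _ n r _ r _ n]) auto
  also have "\<dots> = P * (B * (T * (C * Q)))"
    using assms by (intro assoc_mult_mat[of _ n m _ r _ n]) auto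
  also have "B * (T * (C * Q)) = (B * T) * (C * Q)"
    using assms by (intro assoc_mult_mat[symmetric, of _ m r _ r _ n]) auto
  also have "\<dots> = (B * T * C) * Q"
    using assms by (intro assoc_mult_mat[symmetric, of _ m r _ m _ n]) auto
  also have "P * ((B * T * C) * Q) = P * (B * T * C) * Q"
    using assms by (intro assoc_mult_mat[symmetric, of _ n m _ m _ n]) auto
  finally show ?thesis .
qed

lemma char_matrix_mult_vec:
  assumes A: "A \<in> carrier_mat n n" and v: "v \<in> carrier_vec n"
  shows "char_matrix A e *\<^sub>v v = A *\<^sub>v v - e \<cdot>\<^sub>v v"
proof -
  have "(-e \<cdot>\<^sub>m 1\<^sub>m n) *\<^sub>v v = -e \<cdot>\<^sub>v (1\<^sub>m n *\<^sub>v v)" using v by auto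
  then have "char_matrix A e *\<^sub>v v = A *\<^sub>v v + -e \<cdot>\<^sub>v v"
    unfolding char_matrix_def using A v by (simp add: add_mult_distrib_mat_vec[of _ n n])
  then show ?thesis using A v by (auto intro!: eq_vecI)
qed

lemma solvable_if_det_nonzero:
  fixes A :: "'a::field mat"
  assumes A: "A \<in> carrier_mat n n" and det: "det A \<noteq> 0" and b: "b \<in> carrier_vec n"
  shows "\<exists>w\<in>carrier_vec n. A *\<^sub>v w = b"
proof -
  obtain A' where A': "A' \<in> carrier_mat n n" "A' * A = 1\<^sub>m n"
    using det_non_zero_imp_unit[OF A det, of "()"] unfolding Units_def ring_mat_def by auto
  have "A * A' = 1\<^sub>m n" using mat_mult_left_right_inverse[OF A'(1) A A'(2)] .
  then have "A *\<^sub>v (A' *\<^sub>v b) = b" using A A' b by (simp add: assoc_mult_mat_vec[symmetric])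
  then show ?thesis using A' b by (intro bexI[of _ "A' *\<^sub>v b"]) auto
qed

text \<open>When A u = 0, the last clause says that u spans the kernel of A^2; for u \<noteq> 0 this makes 0
  an eigenvalue of algebraic multiplicity one.\<close>

definition simple_null_vector :: "'a::field mat \<Rightarrow> 'a vec \<Rightarrow> bool" where
  "simple_null_vector A u \<longleftrightarrow> u \<in> carrier_vec (dim_col A) \<and> A *\<^sub>v u = 0\<^sub>v (dim_row A)
     \<and> (\<forall>y\<in>carrier_vec (dim_col A). \<forall>c. A *\<^sub>v y = c \<cdot>\<^sub>v u \<longrightarrow> (\<exists>d. y = d \<cdot>\<^sub>v u))"

lemma simple_null_vector_iff:
  assumes "A \<in> carrier_mat n n"
  shows "simple_null_vector A u \<longleftrightarrow> u \<in> carrier_vec n \<and> A *\<^sub>v u = 0\<^sub>v n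
     \<and> (\<forall>y\<in>carrier_vec n. \<forall>c. A *\<^sub>v y = c \<cdot>\<^sub>v u \<longrightarrow> (\<exists>d. y = d \<cdot>\<^sub>v u))"
  using assms unfolding simple_null_vector_def by auto

lemma eigenvalue_0_if_simple_null_vector:
  assumes "A \<in> carrier_mat n n" and "simple_null_vector A u" and "u \<noteq> 0\<^sub>v n"
  shows "eigenvalue A 0"
proof -
  have "u \<in> carrier_vec n" and "A *\<^sub>v u = 0 \<cdot>\<^sub>v u"
    using assms(1,2) by (auto simp: simple_null_vector_iff intro!: eq_vecI)
  then show ?thesis using assms(1,3) eigenvalue_iff_eigenvector by blast
qed

text \<open>In a basis extending the columns of B, the matrix X + B S C is block upper triangular: it leaves
  the range of B invariant, acting there as S, and acts on the quotient as X does.\<close>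

locale block_triangular =
  fixes n m :: nat and X B C S :: "'a::field mat"
  assumes X: "X \<in> carrier_mat n n" and B: "B \<in> carrier_mat n m"
    and C: "C \<in> carrier_mat m n" and S: "S \<in> carrier_mat m m"
    and left_inverse: "C * B = 1\<^sub>m m" and X_mult_B: "X * B = 0\<^sub>m n m"
begin

lemma carrier: "X + B * S * C \<in> carrier_mat n n"
  using X B C S by simp

lemma mult_vec:
  assumes "v \<in> carrier_vec n"
  shows "(X + B * S * C) *\<^sub>v v = X *\<^sub>v v + B *\<^sub>v (S *\<^sub>v (C *\<^sub>v v))"
proof -
  have "(B * S * C) *\<^sub>v v = B *\<^sub>v (S *\<^sub>v (C *\<^sub>v v))"
    using assms B C S by (simp add: assoc_mult_mat_vec[of _ n m _ n])
  then show ?thesis using assms X B C S by (simp add: add_mult_distrib_mat_vec[of _ n n])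
qed

lemma X_mult_B_vec: "w \<in> carrier_vec m \<Longrightarrow> X *\<^sub>v (B *\<^sub>v w) = 0\<^sub>v n"
  using X B X_mult_B by (simp add: assoc_mult_mat_vec[symmetric, of _ n n _ m])

lemma C_mult_B_vec: "w \<in> carrier_vec m \<Longrightarrow> C *\<^sub>v (B *\<^sub>v w) = w"
  using C B left_inverse by (simp add: assoc_mult_mat_vec[symmetric, of _ m n _ m])

lemma mult_B_vec: "w \<in> carrier_vec m \<Longrightarrow> (X + B * S * C) *\<^sub>v (B *\<^sub>v w) = B *\<^sub>v (S *\<^sub>v w)"
  using B S by (simp add: mult_vec X_mult_B_vec C_mult_B_vec)

lemma B_mult_vec_inj: "w \<in> carrier_vec m \<Longrightarrow> w' \<in> carrier_vec m \<Longrightarrow> B *\<^sub>v w = B *\<^sub>v w' \<Longrightarrow> w = w'"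
  by (metis C_mult_B_vec)

lemma B_mult_vec_eq_0_iff: "w \<in> carrier_vec m \<Longrightarrow> B *\<^sub>v w = 0\<^sub>v n \<longleftrightarrow> w = 0\<^sub>v m"
  using C_mult_B_vec[of w] B C by auto

lemma eigenvalue_if_eigenvalue_S:
  assumes "eigenvalue S \<mu>"
  shows "eigenvalue (X + B * S * C) \<mu>"
proof -
  obtain w where w: "w \<in> carrier_vec m" "w \<noteq> 0\<^sub>v m" "S *\<^sub>v w = \<mu> \<cdot>\<^sub>v w"
    using assms eigenvalue_iff_eigenvector[OF S] by blast
  have "(X + B * S * C) *\<^sub>v (B *\<^sub>v w) = \<mu> \<cdot>\<^sub>v (B *\<^sub>v w)"
    using w B by (simp add: mult_B_vec mult_mat_vec)
  moreover have "B *\<^sub>v w \<noteq> 0\<^sub>v n"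
    using w B_mult_vec_eq_0_iff by simp
  ultimately show ?thesis using B w eigenvalue_iff_eigenvector[OF carrier] by auto
qed

lemma eigenvalue_X_or_S:
  assumes mu: "\<mu> \<noteq> 0" and ev: "eigenvalue (X + B * S * C) \<mu>"
  shows "eigenvalue X \<mu> \<or> eigenvalue S \<mu>"
proof -
  obtain v where v: "v \<in> carrier_vec n" "v \<noteq> 0\<^sub>v n" and Tv: "(X + B * S * C) *\<^sub>v v = \<mu> \<cdot>\<^sub>v v"
    using ev eigenvalue_iff_eigenvector[OF carrier] by blast
  define y where "y = S *\<^sub>v (C *\<^sub>v v)"
  have y: "y \<in> carrier_vec m" using S C v by (simp add: y_def)
  have split: "X *\<^sub>v v + B *\<^sub>v y = \<mu> \<cdot>\<^sub>v v" using Tv mult_vec[OF v(1)] by (simp add: y_def)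
  show ?thesis
  proof (cases "X *\<^sub>v v = 0\<^sub>v n")
    case True
    define w where "w = (1 / \<mu>) \<cdot>\<^sub>v y"
    have w: "w \<in> carrier_vec m" using y by (simp add: w_def)
    have "B *\<^sub>v y = \<mu> \<cdot>\<^sub>v v" using split True B y by simp
    then have v_eq: "v = B *\<^sub>v w" using mu B y v by (simp add: w_def mult_mat_vec smult_smult_assoc)
    have "B *\<^sub>v (S *\<^sub>v w) = B *\<^sub>v (\<mu> \<cdot>\<^sub>v w)" using Tv mult_B_vec[OF w] v_eq B w by (simp add: mult_mat_vec)
    then have "S *\<^sub>v w = \<mu> \<cdot>\<^sub>v w" using B_mult_vec_inj S w by simp
    moreover have "w \<noteq> 0\<^sub>v m" using v v_eq B by auto
    ultimately show ?thesis using w eigenvalue_iff_eigenvector[OF S] by blast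
  next
    case False
    have "X *\<^sub>v (X *\<^sub>v v + B *\<^sub>v y) = X *\<^sub>v (X *\<^sub>v v)"
      using X B v y X_mult_B_vec by (simp add: mult_add_distrib_mat_vec[of _ n n])
    then have "X *\<^sub>v (X *\<^sub>v v) = \<mu> \<cdot>\<^sub>v (X *\<^sub>v v)" using split X v by (simp add: mult_mat_vec)
    then show ?thesis using False X v eigenvalue_iff_eigenvector[OF X] by auto
  qed
qed

lemma eigenvalue_if_eigenvalue_X:
  assumes mu: "\<mu> \<noteq> 0" and evX: "eigenvalue X \<mu>" and not_evS: "\<not> eigenvalue S \<mu>"
  shows "eigenvalue (X + B * S * C) \<mu>"
proof -
  obtain y where y: "y \<in> carrier_vec n" "y \<noteq> 0\<^sub>v n" "X *\<^sub>v y = \<mu> \<cdot>\<^sub>v y"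
    using evX eigenvalue_iff_eigenvector[OF X] by blast
  txt \<open>As S - \<mu> is invertible, y can be corrected by a vector B w of the invariant subspace.\<close>
  have "det (char_matrix S \<mu>) \<noteq> 0" using not_evS eigenvalue_det[OF S] by simp
  then obtain w where w: "w \<in> carrier_vec m" "char_matrix S \<mu> *\<^sub>v w = S *\<^sub>v (C *\<^sub>v y)"
    using solvable_if_det_nonzero[OF char_matrix_closed[OF S, of \<mu>], of "S *\<^sub>v (C *\<^sub>v y)"] S C y by auto
  have Sw: "S *\<^sub>v (C *\<^sub>v y) = S *\<^sub>v w - \<mu> \<cdot>\<^sub>v w"
    using w char_matrix_mult_vec[OF S w(1)] by simp
  define z where "z = y - B *\<^sub>v w"
  have z: "z \<in> carrier_vec n" using y B w by (simp add: z_def)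
  have "(X + B * S * C) *\<^sub>v z = (X + B * S * C) *\<^sub>v y - B *\<^sub>v (S *\<^sub>v w)"
    unfolding z_def using carrier y B w by (simp add: mult_minus_distrib_mat_vec mult_B_vec)
  also have "\<dots> = (\<mu> \<cdot>\<^sub>v y + (B *\<^sub>v (S *\<^sub>v w) - \<mu> \<cdot>\<^sub>v (B *\<^sub>v w))) - B *\<^sub>v (S *\<^sub>v w)"
    using y B S w by (simp add: mult_vec Sw mult_minus_distrib_mat_vec mult_mat_vec)
  also have "\<dots> = \<mu> \<cdot>\<^sub>v z"
    unfolding z_def using y B S w by (intro eq_vecI) (auto simp: algebra_simps)
  finally have Tz: "(X + B * S * C) *\<^sub>v z = \<mu> \<cdot>\<^sub>v z" .
  have "z \<noteq> 0\<^sub>v n"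
  proof
    assume "z = 0\<^sub>v n"
    then have "y = B *\<^sub>v w" using vec_eq_if_minus_eq_0[of y n "B *\<^sub>v w"] y B w by (simp add: z_def)
    then have "\<mu> \<cdot>\<^sub>v y = 0\<^sub>v n" using y(3) X_mult_B_vec[OF w(1)] by simp
    then show False using vec_eq_0_if_smult_eq_0[OF mu y(1)] y(2) by blast
  qed
  then show ?thesis using Tz z eigenvalue_iff_eigenvector[OF carrier] by blast
qed

lemma eigenvalue_iff:
  assumes "\<mu> \<noteq> 0"
  shows "eigenvalue (X + B * S * C) \<mu> \<longleftrightarrow> eigenvalue X \<mu> \<or> eigenvalue S \<mu>"
  using assms eigenvalue_X_or_S eigenvalue_if_eigenvalue_X eigenvalue_if_eigenvalue_S by blast

lemma simple_null_vector_B_mult_vec: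
  assumes preimage: "\<And>y z. y \<in> carrier_vec n \<Longrightarrow> z \<in> carrier_vec m \<Longrightarrow> X *\<^sub>v y = B *\<^sub>v z
      \<Longrightarrow> \<exists>w\<in>carrier_vec m. y = B *\<^sub>v w"
    and null: "simple_null_vector S u"
  shows "simple_null_vector (X + B * S * C) (B *\<^sub>v u)"
proof -
  have u: "u \<in> carrier_vec m" and Su: "S *\<^sub>v u = 0\<^sub>v m"
    and span: "\<And>y c. y \<in> carrier_vec m \<Longrightarrow> S *\<^sub>v y = c \<cdot>\<^sub>v u \<Longrightarrow> \<exists>d. y = d \<cdot>\<^sub>v u"
    using null simple_null_vector_iff[OF S] by auto
  have "\<exists>d. v = d \<cdot>\<^sub>v (B *\<^sub>v u)"
    if v: "v \<in> carrier_vec n" and Tv: "(X + B * S * C) *\<^sub>v v = c \<cdot>\<^sub>v (B *\<^sub>v u)" for v c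
  proof -
    define y where "y = S *\<^sub>v (C *\<^sub>v v)"
    have y: "y \<in> carrier_vec m" using S C v by (simp add: y_def)
    have "X *\<^sub>v v + B *\<^sub>v y = B *\<^sub>v (c \<cdot>\<^sub>v u)"
      using Tv mult_vec[OF v] B u by (simp add: y_def mult_mat_vec)
    then have "X *\<^sub>v v = B *\<^sub>v (c \<cdot>\<^sub>v u) - B *\<^sub>v y"
      using vec_eq_minus_if_add_eq[of "X *\<^sub>v v" n "B *\<^sub>v y"] X B v y by simp
    also have "\<dots> = B *\<^sub>v (c \<cdot>\<^sub>v u - y)" using B u y by (simp add: mult_minus_distrib_mat_vec)
    finally obtain w where w: "w \<in> carrier_vec m" "v = B *\<^sub>v w"
      using preimage[OF v, of "c \<cdot>\<^sub>v u - y"] u y by auto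
    have "B *\<^sub>v (S *\<^sub>v w) = B *\<^sub>v (c \<cdot>\<^sub>v u)" using Tv mult_B_vec[OF w(1)] w(2) B u by (simp add: mult_mat_vec)
    then have "S *\<^sub>v w = c \<cdot>\<^sub>v u" using B_mult_vec_inj S w u by simp
    then obtain d where "w = d \<cdot>\<^sub>v u" using span w(1) by blast
    then show ?thesis using w(2) B u by (auto simp: mult_mat_vec)
  qed
  moreover have "(X + B * S * C) *\<^sub>v (B *\<^sub>v u) = 0\<^sub>v n" using mult_B_vec[OF u] Su B by simp
  ultimately show ?thesis using simple_null_vector_iff[OF carrier] B u by auto
qed

end

lemma eigenvalue_sandwich_iff:
  fixes S :: "'a::field mat"
  assumes P: "P \<in> carrier_mat n m" and Q: "Q \<in> carrier_mat m n" and S: "S \<in> carrier_mat m m"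
    and QP: "Q * P = 1\<^sub>m m" and mu: "\<mu> \<noteq> 0"
  shows "eigenvalue (P * S * Q) \<mu> \<longleftrightarrow> eigenvalue S \<mu>"
proof -
  interpret block_triangular n m "0\<^sub>m n n" P Q S
    using P Q S QP by unfold_locales auto
  have "\<not> eigenvalue (0\<^sub>m n n) \<mu>"
  proof
    assume "eigenvalue (0\<^sub>m n n) \<mu>"
    then obtain v where "v \<in> carrier_vec n" "v \<noteq> 0\<^sub>v n" "0\<^sub>m n n *\<^sub>v v = \<mu> \<cdot>\<^sub>v v"
      using eigenvalue_iff_eigenvector[OF zero_carrier_mat[of n n]] by blast
    then show False using vec_eq_0_if_smult_eq_0[OF mu, of v n] by simp
  qed
  moreover have "0\<^sub>m n n + P * S * Q = P * S * Q" using P S Q by simp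
  ultimately show ?thesis using eigenvalue_iff[OF mu] by simp
qed

lemma simple_null_vector_similar:
  assumes A: "A \<in> carrier_mat n n" and P: "P \<in> carrier_mat n n" and Q: "Q \<in> carrier_mat n n"
    and PQ: "P * Q = 1\<^sub>m n" and QP: "Q * P = 1\<^sub>m n" and null: "simple_null_vector A u"
  shows "simple_null_vector (Q * A * P) (Q *\<^sub>v u)"
proof -
  have u: "u \<in> carrier_vec n" and Au: "A *\<^sub>v u = 0\<^sub>v n"
    and span: "\<And>y c. y \<in> carrier_vec n \<Longrightarrow> A *\<^sub>v y = c \<cdot>\<^sub>v u \<Longrightarrow> \<exists>d. y = d \<cdot>\<^sub>v u"
    using null simple_null_vector_iff[OF A] by auto
  have QAP: "(Q * A * P) *\<^sub>v y = Q *\<^sub>v (A *\<^sub>v (P *\<^sub>v y))" if "y \<in> carrier_vec n" for y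
    using that A P Q by (simp add: assoc_mult_mat_vec[of _ n n _ n])
  have PQ_vec: "P *\<^sub>v (Q *\<^sub>v v) = v" and QP_vec: "Q *\<^sub>v (P *\<^sub>v v) = v" if "v \<in> carrier_vec n" for v
    using that P Q PQ QP by (simp_all add: assoc_mult_mat_vec[symmetric, of _ n n _ n])
  have "\<exists>d. y = d \<cdot>\<^sub>v (Q *\<^sub>v u)"
    if y: "y \<in> carrier_vec n" and e: "(Q * A * P) *\<^sub>v y = c \<cdot>\<^sub>v (Q *\<^sub>v u)" for y c
  proof -
    have "A *\<^sub>v (P *\<^sub>v y) = P *\<^sub>v ((Q * A * P) *\<^sub>v y)" using QAP PQ_vec y A P by simp
    also have "\<dots> = c \<cdot>\<^sub>v u" using e PQ_vec u P Q by (simp add: mult_mat_vec)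
    finally obtain d where "P *\<^sub>v y = d \<cdot>\<^sub>v u" using span P y by (meson mult_mat_vec_carrier)
    then have "y = d \<cdot>\<^sub>v (Q *\<^sub>v u)" using QP_vec[OF y] Q u by (simp add: mult_mat_vec)
    then show ?thesis ..
  qed
  moreover have "(Q * A * P) *\<^sub>v (Q *\<^sub>v u) = 0\<^sub>v n" using QAP PQ_vec Au Q u by simp
  ultimately show ?thesis using simple_null_vector_iff[of "Q * A * P" n] A P Q u by auto
qed

lemma exists_invertible_mat_first_column:
  fixes u :: "'a::field vec"
  assumes u: "u \<in> carrier_vec n" and n: "0 < n" and u0: "u $ 0 \<noteq> 0"
  obtains P Q where "P \<in> carrier_mat n n" "Q \<in> carrier_mat n n" "P * Q = 1\<^sub>m n" "Q * P = 1\<^sub>m n"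
    "P *\<^sub>v unit_vec n 0 = u"
proof -
  define P where "P = mat n n (\<lambda>(i, j). if j = 0 then u $ i else if i = j then 1 else 0)"
  have P: "P \<in> carrier_mat n n" by (simp add: P_def)
  have "det P = prod_list (diag_mat P)" by (rule det_lower_triangular[OF _ P]) (auto simp: P_def)
  also have "\<dots> = u $ 0"
  proof -
    have "diag_mat P = u $ 0 # map (\<lambda>_. 1) [1..<n]"
      using n by (auto simp: diag_mat_def P_def upt_conv_Cons)
    then show ?thesis by (simp add: map_replicate_const)
  qed
  finally have "det P \<noteq> 0" using u0 by simp
  then obtain Q where Q: "Q \<in> carrier_mat n n" "Q * P = 1\<^sub>m n"
    using det_non_zero_imp_unit[OF P, of "()"] unfolding Units_def ring_mat_def by auto
  moreover have "P * Q = 1\<^sub>m n" using mat_mult_left_right_inverse[OF Q(1) P Q(2)] .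
  moreover have "P *\<^sub>v unit_vec n 0 = u" by (rule eq_vecI) (use u n in \<open>auto simp: P_def\<close>)
  ultimately show thesis using that P by blast
qed

lemma not_eigenvalue_0_mat_delete:
  fixes A :: "'a::field mat"
  assumes A: "A \<in> carrier_mat (Suc n) (Suc n)" and null: "simple_null_vector A (unit_vec (Suc n) 0)"
  shows "\<not> eigenvalue (mat_delete A 0 0) 0"
proof
  let ?e = "unit_vec (Suc n) 0 :: 'a vec"
  define R where "R = mat_delete A 0 0"
  have R: "R \<in> carrier_mat n n" unfolding R_def using mat_delete_carrier[OF A] by simp
  assume "eigenvalue (mat_delete A 0 0) 0"
  then obtain y where y: "y \<in> carrier_vec n" "y \<noteq> 0\<^sub>v n" "R *\<^sub>v y = 0 \<cdot>\<^sub>v y"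
    using eigenvalue_iff_eigenvector[OF R] by (auto simp: R_def)
  txt \<open>Padding y with a leading zero gives a vector outside the span of the first unit vector
    that A maps into this span.\<close>
  define z where "z = vec (Suc n) (\<lambda>i. if i = 0 then 0 else y $ (i - 1))"
  have "A *\<^sub>v z = (A *\<^sub>v z) $ 0 \<cdot>\<^sub>v ?e"
  proof (rule eq_vecI)
    fix j assume "j < dim_vec ((A *\<^sub>v z) $ 0 \<cdot>\<^sub>v ?e)"
    then have j: "j < Suc n" by simp
    show "(A *\<^sub>v z) $ j = ((A *\<^sub>v z) $ 0 \<cdot>\<^sub>v ?e) $ j"
    proof (cases j)
      case (Suc j')
      then have j': "j' < n" using j by simp
      have "(A *\<^sub>v z) $ j = (\<Sum>i<Suc n. A $$ (j, i) * z $ i)"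
        using j A by (simp add: scalar_prod_def row_def z_def lessThan_atLeast0)
      also have "\<dots> = (\<Sum>i<n. A $$ (j, Suc i) * y $ i)"
        by (subst sum.lessThan_Suc_shift) (simp add: z_def)
      also have "\<dots> = (R *\<^sub>v y) $ j'"
        using R A j' y(1) by (simp add: scalar_prod_def row_def R_def mat_delete_def Suc lessThan_atLeast0)
      finally show ?thesis using y(1,3) j' Suc by simp
    qed simp
  qed (use A in simp)
  then obtain d where zd: "z = d \<cdot>\<^sub>v ?e"
    using null simple_null_vector_iff[OF A] by (auto simp: z_def)
  have "y $ i = 0" if "i < n" for i
    using arg_cong[OF zd, of "\<lambda>v. v $ Suc i"] that by (simp add: z_def)
  then show False using y(1,2) by (auto intro!: eq_vecI)
qed

lemma order_char_poly_zero_eq_1_unit_vec: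
  fixes A :: "'a::field mat"
  assumes A: "A \<in> carrier_mat n n" and n: "0 < n" and null: "simple_null_vector A (unit_vec n 0)"
  shows "order 0 (char_poly A) = 1"
proof -
  obtain n' where n': "n = Suc n'" using n by (cases n) auto
  define R where "R = mat_delete A 0 0"
  have R: "R \<in> carrier_mat n' n'" unfolding R_def using mat_delete_carrier[OF A] n' by simp
  have "A $$ (j, 0) = 0" if "j < n" for j
    using null simple_null_vector_iff[OF A] that A n
    by (auto dest!: arg_cong[of _ _ "\<lambda>v. v $ j"])
  then have "char_poly A = monom 1 1 * char_poly R"
    unfolding R_def using A n by (rule char_poly_0_column)
  moreover have "order 0 (char_poly R) = 0"
    using not_eigenvalue_0_mat_delete[of A n'] A null eigenvalue_root_char_poly[OF R] n'
    by (simp add: R_def order_0I)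
  moreover have "char_poly R \<noteq> 0" using degree_monic_char_poly[OF R] by auto
  ultimately show ?thesis by (simp add: order_mult order_0_monom monom_eq_0_iff)
qed

lemma order_char_poly_zero_eq_1:
  fixes A :: "'a::field mat"
  assumes A: "A \<in> carrier_mat n n" and null: "simple_null_vector A u" and u0: "u $ 0 \<noteq> 0"
    and n: "0 < n"
  shows "order 0 (char_poly A) = 1"
proof -
  have u: "u \<in> carrier_vec n" using null simple_null_vector_iff[OF A] by auto
  obtain P Q where P: "P \<in> carrier_mat n n" and Q: "Q \<in> carrier_mat n n"
    and PQ: "P * Q = 1\<^sub>m n" and QP: "Q * P = 1\<^sub>m n" and Pe: "P *\<^sub>v unit_vec n 0 = u"
    using exists_invertible_mat_first_column[OF u n u0] by blast
  have "Q *\<^sub>v u = unit_vec n 0"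
    using Pe[symmetric] P Q QP by (simp add: assoc_mult_mat_vec[symmetric, of _ n n _ n])
  then have null': "simple_null_vector (Q * A * P) (unit_vec n 0)"
    using simple_null_vector_similar[OF A P Q PQ QP null] by simp
  have "similar_mat A (Q * A * P)"
  proof (rule similar_matI[where n = n])
    have "P * (Q * A * P) * Q = (P * Q) * A * (P * Q)"
      using A P Q by (simp add: assoc_mult_mat[of _ n n _ n _ n])
    then show "A = P * (Q * A * P) * Q" using A PQ by simp
  qed (use A P Q PQ QP in auto)
  then have "char_poly A = char_poly (Q * A * P)" by (rule char_poly_similar)
  moreover have "Q * A * P \<in> carrier_mat n n" using A P Q by simp
  ultimately show ?thesis using order_char_poly_zero_eq_1_unit_vec[OF _ n null'] by simp
qed

context semiring_hom
begin

lemma mat_hom_add: "A \<in> carrier_mat nr nc \<Longrightarrow> B \<in> carrier_mat nr nc \<Longrightarrow> mat\<^sub>h (A + B) = mat\<^sub>h A + mat\<^sub>h B"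
  by (rule eq_matI) (auto simp: hom_add)

lemma mat_hom_block:
  assumes "X \<in> carrier_mat n n" "B \<in> carrier_mat n m" "C \<in> carrier_mat m n" "S \<in> carrier_mat m m"
  shows "mat\<^sub>h (X + B * S * C) = mat\<^sub>h X + mat\<^sub>h B * mat\<^sub>h S * mat\<^sub>h C"
proof -
  have "mat\<^sub>h (B * S * C) = mat\<^sub>h B * mat\<^sub>h S * mat\<^sub>h C"
    using assms mat_hom_mult[of "B * S" n m C n] mat_hom_mult[of B n m S m] by simp
  then show ?thesis using assms mat_hom_add[of X n n "B * S * C"] by simp
qed

end

lemma (in field_hom) block_triangular_hom:
  assumes "block_triangular n m X B C S"
  shows "block_triangular n m (mat\<^sub>h X) (mat\<^sub>h B) (mat\<^sub>h C) (mat\<^sub>h S)"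
proof -
  interpret block_triangular n m X B C S by fact
  show ?thesis
    by unfold_locales
      (use X B C S left_inverse X_mult_B in \<open>auto simp: mat_hom_mult[symmetric] mat_hom_one\<close>)
qed

abbreviation cpx :: "real mat \<Rightarrow> complex mat" where
  "cpx \<equiv> map_mat complex_of_real"

lemma cpx_mult: "A \<in> carrier_mat nr n \<Longrightarrow> B \<in> carrier_mat n nc \<Longrightarrow> cpx (A * B) = cpx A * cpx B"
  by (rule of_real_hom.mat_hom_mult)

lemma cpx_mult_vec:
  "A \<in> carrier_mat nr n \<Longrightarrow> v \<in> carrier_vec n \<Longrightarrow> cpx A *\<^sub>v map_vec complex_of_real v = map_vec complex_of_real (A *\<^sub>v v)"
  by (rule of_real_hom.mult_mat_vec_hom[symmetric])

lemma map_vec_of_real_ones[simp]: "map_vec of_real (vec n (\<lambda>_. 1)) = vec n (\<lambda>_. 1)"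
  by (rule eq_vecI) auto

lemma Re_mult_mat_vec_of_real:
  assumes "A \<in> carrier_mat nr n" and "y \<in> carrier_vec n"
  shows "map_vec Re (cpx A *\<^sub>v y) = A *\<^sub>v map_vec Re y"
  by (rule eq_vecI) (use assms in \<open>auto simp: scalar_prod_def Re_sum\<close>)

lemma Im_mult_mat_vec_of_real:
  assumes "A \<in> carrier_mat nr n" and "y \<in> carrier_vec n"
  shows "map_vec Im (cpx A *\<^sub>v y) = A *\<^sub>v map_vec Im y"
  by (rule eq_vecI) (use assms in \<open>auto simp: scalar_prod_def Im_sum\<close>)

lemma range_preimage_of_real:
  fixes X B :: "real mat"
  assumes X: "X \<in> carrier_mat n n" and B: "B \<in> carrier_mat n m"
    and real_preimage: "\<And>y z. y \<in> carrier_vec n \<Longrightarrow> z \<in> carrier_vec m \<Longrightarrow> X *\<^sub>v y = B *\<^sub>v z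
      \<Longrightarrow> \<exists>w\<in>carrier_vec m. y = B *\<^sub>v w"
    and y: "y \<in> carrier_vec n" and z: "z \<in> carrier_vec m"
    and eq: "cpx X *\<^sub>v y = cpx B *\<^sub>v z"
  shows "\<exists>w\<in>carrier_vec m. y = cpx B *\<^sub>v w"
proof -
  obtain w1 where w1: "w1 \<in> carrier_vec m" "map_vec Re y = B *\<^sub>v w1"
    using real_preimage[of "map_vec Re y" "map_vec Re z"] arg_cong[OF eq, of "map_vec Re"]
      Re_mult_mat_vec_of_real[OF X y] Re_mult_mat_vec_of_real[OF B z] y z by auto
  obtain w2 where w2: "w2 \<in> carrier_vec m" "map_vec Im y = B *\<^sub>v w2"
    using real_preimage[of "map_vec Im y" "map_vec Im z"] arg_cong[OF eq, of "map_vec Im"]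
      Im_mult_mat_vec_of_real[OF X y] Im_mult_mat_vec_of_real[OF B z] y z by auto
  define w where "w = vec m (\<lambda>j. Complex (w1 $ j) (w2 $ j))"
  have w: "w \<in> carrier_vec m" by (simp add: w_def)
  have "map_vec Re w = w1" "map_vec Im w = w2" using w1 w2 by (auto simp: w_def intro!: eq_vecI)
  then have Re: "map_vec Re (cpx B *\<^sub>v w) = map_vec Re y"
    and Im: "map_vec Im (cpx B *\<^sub>v w) = map_vec Im y"
    using Re_mult_mat_vec_of_real[OF B w] Im_mult_mat_vec_of_real[OF B w] w1 w2 by simp_all
  have "y = cpx B *\<^sub>v w"
  proof (rule eq_vecI)
    fix i assume "i < dim_vec (cpx B *\<^sub>v w)"
    then have i: "i < n" using B by simp
    show "y $ i = (cpx B *\<^sub>v w) $ i"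
      using arg_cong[OF Re, of "\<lambda>v. v $ i"] arg_cong[OF Im, of "\<lambda>v. v $ i"] i y B
      by (auto intro: complex_eqI)
  qed (use y B in simp)
  then show ?thesis using w by blast
qed

lemma finite_grp[simp]: "finite (grp k l p)"
  by (simp add: grp_def)

lemma grp_disjoint:
  assumes "i \<in> grp k l p" and "i \<in> grp k l q"
  shows "p = q"
proof -
  have mono: "(\<Sum>m<Suc p'. k l m) \<le> (\<Sum>m<q'. k l m)" if "p' < q'" for p' q'
    using that by (intro sum_mono2) auto
  show ?thesis
    using mono[of p q] mono[of q p] assms unfolding grp_def by (cases p q rule: linorder_cases) auto
qed

lemma grp_less_sum:
  assumes "p < P" and "i \<in> grp k l p"
  shows "i < (\<Sum>m<P. k l m)"
proof -
  have "i < (\<Sum>m<Suc p. k l m)" using assms(2) by (simp add: grp_def)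
  also have "\<dots> \<le> (\<Sum>m<P. k l m)" using assms(1) by (intro sum_mono2) auto
  finally show ?thesis .
qed

lemma grp_cover:
  assumes "i < (\<Sum>m<P. k l m)"
  shows "\<exists>p<P. i \<in> grp k l p"
  using assms
proof (induction P)
  case (Suc P)
  then show ?case
    by (cases "i < (\<Sum>m<P. k l m)") (auto simp: grp_def intro: less_SucI)
qed simp

lemma grp_first: "0 < k l p \<Longrightarrow> (\<Sum>m<p. k l m) \<in> grp k l p"
  by (simp add: grp_def)

locale hierarchy =
  fixes M :: nat and N :: "nat \<Rightarrow> nat" and k :: "nat \<Rightarrow> nat \<Rightarrow> nat"
    and adj :: "nat \<Rightarrow> nat \<Rightarrow> nat \<Rightarrow> bool" and a :: "nat \<Rightarrow> real"
    and c :: "nat \<Rightarrow> nat \<Rightarrow> real"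
  assumes M2: "M \<ge> 2"
    and Ntop: "N (Suc M) = 1"
    and kpos: "\<forall>l\<in>{1..M}. \<forall>p<N (Suc l). k l p \<ge> 1"
    and ksum: "\<forall>l\<in>{1..M}. (\<Sum>p<N (Suc l). k l p) = N l"
    and adj_sym: "\<forall>l\<in>{1..M}. \<forall>i j. adj l i j \<longrightarrow> adj l j i"
    and adj_irrefl: "\<forall>l\<in>{1..M}. \<forall>i. \<not> adj l i i"
    and adj_grp: "\<forall>l\<in>{1..M}. \<forall>i j. adj l i j \<longrightarrow> (\<exists>p<N (Suc l). i \<in> grp k l p \<and> j \<in> grp k l p)"
    and adj_conn: "\<forall>l\<in>{1..M}. \<forall>p<N (Suc l). \<forall>i\<in>grp k l p. \<forall>j\<in>grp k l p.
        (i, j) \<in> {(x, y). x \<in> grp k l p \<and> y \<in> grp k l p \<and> adj l x y}\<^sup>*"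
    and apos: "\<forall>i<N 1. a i > 0"
    and c_sum: "\<forall>l\<in>{1..<M}. \<forall>p<N (Suc l). (\<Sum>i\<in>grp k l p. c l i) = 1"
begin

lemma grp_less:
  assumes "l \<in> {1..M}" and "p < N (Suc l)" and "i \<in> grp k l p"
  shows "i < N l"
  using grp_less_sum[OF assms(2,3)] ksum assms(1) by simp

lemma grp_exists:
  assumes "l \<in> {1..M}" and "i < N l"
  shows "\<exists>p<N (Suc l). i \<in> grp k l p"
  using grp_cover[where i = i and P = "N (Suc l)" and k = k and l = l] ksum assms by simp

lemma grp_start:
  assumes "l \<in> {1..M}" and "p < N (Suc l)"
  shows "(\<Sum>m<p. k l m) \<in> grp k l p"
  using grp_first[of k l p] kpos assms by fastforce

lemma grp_nonempty: "l \<in> {1..M} \<Longrightarrow> p < N (Suc l) \<Longrightarrow> grp k l p \<noteq> {}"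
  using grp_start by blast

lemma wt_pos: "l \<in> {1..M} \<Longrightarrow> i < N l \<Longrightarrow> wt k a l i > 0"
proof (induction l arbitrary: i)
  case (Suc l)
  show ?case
  proof (cases "l = 0")
    case True
    then show ?thesis using Suc.prems apos by simp
  next
    case False
    then have l: "l \<in> {1..M}" using Suc.prems by auto
    have "0 < (\<Sum>j\<in>grp k l i. wt k a l j)"
      using Suc grp_nonempty[OF l] grp_less[OF l] l by (intro sum_pos) auto
    then show ?thesis using False by (cases l) auto
  qed
qed simp

abbreviation X :: "nat \<Rightarrow> real mat" where "X l \<equiv> Kmat N k a l * LapD N adj l"
abbreviation B :: "nat \<Rightarrow> real mat" where "B l \<equiv> Bmat N k l"
abbreviation C :: "nat \<Rightarrow> real mat" where "C l \<equiv> Cmat N k c l"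

lemma carrier_mats[simp]:
  "Kmat N k a l \<in> carrier_mat (N l) (N l)" "LapD N adj l \<in> carrier_mat (N l) (N l)"
  "X l \<in> carrier_mat (N l) (N l)"
  "B l \<in> carrier_mat (N l) (N (Suc l))" "C l \<in> carrier_mat (N (Suc l)) (N l)"
  unfolding Kmat_def LapD_def Bmat_def Cmat_def by auto

lemma dim_mats[simp]:
  "dim_row (LapD N adj l) = N l" "dim_col (LapD N adj l) = N l"
  "dim_row (B l) = N l" "dim_col (B l) = N (Suc l)"
  "dim_row (C l) = N (Suc l)" "dim_col (C l) = N l"
  unfolding LapD_def Bmat_def Cmat_def by auto

lemma Kmat_mult_vec:
  assumes "y \<in> carrier_vec (N l)" and "i < N l"
  shows "(Kmat N k a l *\<^sub>v y) $ i = y $ i / wt k a l i"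
proof -
  have "(Kmat N k a l *\<^sub>v y) $ i = (\<Sum>j\<in>{0..<N l}. (if i = j then 1 / wt k a l i else 0) * y $ j)"
    using assms by (simp add: Kmat_def scalar_prod_def)
  also have "\<dots> = (\<Sum>j\<in>{0..<N l}. if j = i then y $ j / wt k a l i else 0)"
    by (rule sum.cong) auto
  finally show ?thesis using assms(2) by simp
qed

lemma LapD_mult_vec:
  assumes l: "l \<in> {1..M}" and y: "y \<in> carrier_vec (N l)" and i: "i < N l"
  shows "(LapD N adj l *\<^sub>v y) $ i = (\<Sum>j | j < N l \<and> adj l i j. y $ i - y $ j)"
proof -
  let ?nb = "{j. j < N l \<and> adj l i j}"
  have irr: "\<not> adj l i i" using adj_irrefl l by blast
  have "(LapD N adj l *\<^sub>v y) $ i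
      = (\<Sum>j<N l. (if j = i then real (card ?nb) * y $ j else 0) + (if adj l i j then - y $ j else 0))"
    using i y irr by (auto simp: LapD_def scalar_prod_def lessThan_atLeast0 intro!: sum.cong)
  also have "\<dots> = real (card ?nb) * y $ i - (\<Sum>j\<in>?nb. y $ j)"
    using i by (simp add: sum.distrib sum.If_cases sum_negf Collect_conj_eq lessThan_def Int_commute)
  also have "\<dots> = (\<Sum>j\<in>?nb. y $ i - y $ j)" by (simp add: sum_subtractf)
  finally show ?thesis .
qed

lemma adj_same_grp:
  assumes "l \<in> {1..M}" and "adj l i j"
  shows "i \<in> grp k l p \<longleftrightarrow> j \<in> grp k l p"
  using adj_grp assms grp_disjoint by blast

lemma neighbours_in_grp:
  assumes l: "l \<in> {1..M}" and p: "p < N (Suc l)" and i: "i \<in> grp k l p"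
  shows "{j. j < N l \<and> adj l i j} = {j \<in> grp k l p. adj l i j}"
  using adj_same_grp[OF l, of i _ p] i grp_less[OF l p] by auto

lemma B_mult_vec:
  assumes l: "l \<in> {1..M}" and w: "w \<in> carrier_vec (N (Suc l))"
    and p: "p < N (Suc l)" and i: "i \<in> grp k l p"
  shows "(B l *\<^sub>v w) $ i = w $ p"
proof -
  have "(B l *\<^sub>v w) $ i = (\<Sum>q\<in>{0..<N (Suc l)}. (if i \<in> grp k l q then 1 else 0) * w $ q)"
    using grp_less[OF l p i] w by (simp add: Bmat_def scalar_prod_def)
  also have "\<dots> = (\<Sum>q\<in>{0..<N (Suc l)}. if q = p then w $ q else 0)"
    by (rule sum.cong) (use i grp_disjoint in auto)
  finally show ?thesis using p by simp
qed

lemma LapD_mult_B: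
  assumes l: "l \<in> {1..M}"
  shows "LapD N adj l * B l = 0\<^sub>m (N l) (N (Suc l))"
proof (rule eq_matI)
  fix i p assume i: "i < dim_row (0\<^sub>m (N l) (N (Suc l)) :: real mat)"
    and p: "p < dim_col (0\<^sub>m (N l) (N (Suc l)) :: real mat)"
  have "(LapD N adj l * B l) $$ (i, p) = (LapD N adj l *\<^sub>v col (B l) p) $ i"
    using i p by simp
  also have "\<dots> = (\<Sum>j | j < N l \<and> adj l i j. col (B l) p $ i - col (B l) p $ j)"
    using LapD_mult_vec[OF l _ , of "col (B l) p" i] i by (simp add: carrier_vecI)
  also have "\<dots> = 0"
    using i p adj_same_grp[OF l, of i _ p] by (intro sum.neutral) (auto simp: Bmat_def)
  finally show "(LapD N adj l * B l) $$ (i, p) = 0\<^sub>m (N l) (N (Suc l)) $$ (i, p)" using i p by simp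
qed auto

lemma X_mult_B: "l \<in> {1..M} \<Longrightarrow> X l * B l = 0\<^sub>m (N l) (N (Suc l))"
  using LapD_mult_B[of l]
  by (simp add: assoc_mult_mat[of _ "N l" "N l" _ "N l" _ "N (Suc l)"] right_mult_zero_mat[of _ "N l" "N l"])

lemma C_mult_B:
  assumes l: "l \<in> {1..<M}"
  shows "C l * B l = 1\<^sub>m (N (Suc l))"
proof (rule eq_matI)
  fix p q assume p: "p < dim_row (1\<^sub>m (N (Suc l)) :: real mat)"
    and q: "q < dim_col (1\<^sub>m (N (Suc l)) :: real mat)"
  have grp: "grp k l p \<subseteq> {0..<N l}" using grp_less[of l p] l p by auto
  have "(C l * B l) $$ (p, q) = (\<Sum>i\<in>{0..<N l}. if i \<in> grp k l p then (if p = q then c l i else 0) else 0)"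
    using p q grp_disjoint by (auto simp: scalar_prod_def Cmat_def Bmat_def intro!: sum.cong)
  also have "\<dots> = (\<Sum>i\<in>grp k l p. if p = q then c l i else 0)"
    using grp by (simp add: sum.If_cases Int_absorb1)
  also have "\<dots> = 1\<^sub>m (N (Suc l)) $$ (p, q)" using c_sum l p q by auto
  finally show "(C l * B l) $$ (p, q) = 1\<^sub>m (N (Suc l)) $$ (p, q)" .
qed auto

lemma B_mult_ones:
  assumes l: "l \<in> {1..M}"
  shows "B l *\<^sub>v vec (N (Suc l)) (\<lambda>_. 1) = vec (N l) (\<lambda>_. 1)"
proof (rule eq_vecI)
  fix i assume "i < dim_vec (vec (N l) (\<lambda>_. 1 :: real))"
  then obtain p where "p < N (Suc l)" "i \<in> grp k l p" using grp_exists[OF l] by auto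
  then show "(B l *\<^sub>v vec (N (Suc l)) (\<lambda>_. 1)) $ i = vec (N l) (\<lambda>_. 1) $ i"
    using B_mult_vec[OF l] grp_less[OF l] by simp
qed simp

lemma LapD_grp_sum:
  assumes l: "l \<in> {1..M}" and p: "p < N (Suc l)" and y: "y \<in> carrier_vec (N l)"
  shows "(\<Sum>i\<in>grp k l p. (LapD N adj l *\<^sub>v y) $ i) = 0"
proof -
  let ?G = "grp k l p"
  let ?f = "\<lambda>i j. if adj l i j then y $ i - y $ j else 0"
  have lap: "(\<Sum>i\<in>?G. (LapD N adj l *\<^sub>v y) $ i) = (\<Sum>i\<in>?G. \<Sum>j\<in>?G. ?f i j)"
  proof (rule sum.cong[OF refl])
    fix i assume i: "i \<in> ?G"
    have "(LapD N adj l *\<^sub>v y) $ i = (\<Sum>j\<in>{j \<in> ?G. adj l i j}. y $ i - y $ j)"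
      using LapD_mult_vec[OF l y grp_less[OF l p i]] neighbours_in_grp[OF l p i] by simp
    also have "\<dots> = (\<Sum>j\<in>?G. ?f i j)" by (rule sum.inter_filter) simp
    finally show "(LapD N adj l *\<^sub>v y) $ i = (\<Sum>j\<in>?G. ?f i j)" .
  qed
  have "(\<Sum>i\<in>?G. \<Sum>j\<in>?G. ?f i j) = (\<Sum>j\<in>?G. \<Sum>i\<in>?G. ?f i j)" by (rule sum.swap)
  also have "\<dots> = (\<Sum>j\<in>?G. \<Sum>i\<in>?G. - ?f j i)"
    by (intro sum.cong refl) (use adj_sym l in auto)
  also have "\<dots> = - (\<Sum>i\<in>?G. \<Sum>j\<in>?G. ?f i j)" by (simp add: sum_negf)
  finally show ?thesis using lap by simp
qed

lemma LapD_null_imp_const_on_grp: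
  assumes l: "l \<in> {1..M}" and p: "p < N (Suc l)" and y: "y \<in> carrier_vec (N l)"
    and null: "\<forall>i\<in>grp k l p. (LapD N adj l *\<^sub>v y) $ i = 0"
    and i: "i \<in> grp k l p" and j: "j \<in> grp k l p"
  shows "y $ i = y $ j"
proof -
  let ?G = "grp k l p"
  define m where "m = Max ((\<lambda>i. y $ i) ` ?G)"
  have "m \<in> (\<lambda>i. y $ i) ` ?G" unfolding m_def using grp_nonempty[OF l p] by (intro Max_in) auto
  then obtain i0 where i0: "i0 \<in> ?G" "y $ i0 = m" by auto
  have le: "y $ j \<le> m" if "j \<in> ?G" for j using that by (simp add: m_def)
  have step: "y $ x' = m" if "x \<in> ?G" "y $ x = m" "x' \<in> ?G" "adj l x x'" for x x'
  proof -
    have "(\<Sum>j | j \<in> ?G \<and> adj l x j. y $ x - y $ j) = 0"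
      using null that(1) LapD_mult_vec[OF l y grp_less[OF l p that(1)]] neighbours_in_grp[OF l p that(1)]
      by simp
    then have "\<forall>j\<in>{j \<in> ?G. adj l x j}. y $ x - y $ j = 0"
      using le that(2) by (subst sum_nonneg_eq_0_iff[symmetric]) auto
    then show ?thesis using that by auto
  qed
  txt \<open>Maximum principle: the maximum propagates along edges of the connected group graph.\<close>
  have "y $ j = m" if "(i0, j) \<in> {(x, y). x \<in> ?G \<and> y \<in> ?G \<and> adj l x y}\<^sup>*" for j
    using that by (induction rule: rtrancl_induct) (use i0 step in auto)
  then have "y $ j = m" if "j \<in> ?G" for j
    using adj_conn l p i0(1) that by blast
  then show ?thesis using i j by simp
qed

lemma X_preimage_range:
  assumes l: "l \<in> {1..M}" and y: "y \<in> carrier_vec (N l)" and z: "z \<in> carrier_vec (N (Suc l))"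
    and eq: "X l *\<^sub>v y = B l *\<^sub>v z"
  shows "\<exists>w\<in>carrier_vec (N (Suc l)). y = B l *\<^sub>v w"
proof -
  have Ly: "(LapD N adj l *\<^sub>v y) $ i = wt k a l i * z $ p"
    if p: "p < N (Suc l)" and i: "i \<in> grp k l p" for i p
  proof -
    have iN: "i < N l" using grp_less[OF l p i] .
    have "(LapD N adj l *\<^sub>v y) $ i / wt k a l i = (X l *\<^sub>v y) $ i"
      using Kmat_mult_vec[OF mult_mat_vec_carrier[OF carrier_mats(2) y] iN] y
      by (simp add: assoc_mult_mat_vec[of _ "N l" "N l" _ "N l"])
    also have "\<dots> = z $ p" using eq B_mult_vec[OF l z p i] by simp
    finally have "(LapD N adj l *\<^sub>v y) $ i / wt k a l i = z $ p" .
    then show ?thesis using wt_pos[OF l iN] by (simp add: field_simps)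
  qed
  txt \<open>Summing over a group, the Laplacian part vanishes while the weights are positive: so z = 0.\<close>
  have z0: "z $ p = 0" if p: "p < N (Suc l)" for p
  proof -
    have "(\<Sum>i\<in>grp k l p. wt k a l i) * z $ p = 0"
      using LapD_grp_sum[OF l p y] Ly[OF p] by (simp add: sum_distrib_right)
    moreover have "(\<Sum>i\<in>grp k l p. wt k a l i) > 0"
      using grp_nonempty[OF l p] wt_pos[OF l] grp_less[OF l p] by (intro sum_pos) auto
    ultimately show ?thesis by simp
  qed
  define w where "w = vec (N (Suc l)) (\<lambda>p. y $ (\<Sum>m<p. k l m))"
  have w: "w \<in> carrier_vec (N (Suc l))" by (simp add: w_def)
  have "y = B l *\<^sub>v w"
  proof (rule eq_vecI)
    fix i assume "i < dim_vec (B l *\<^sub>v w)"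
    then obtain p where p: "p < N (Suc l)" "i \<in> grp k l p" using grp_exists[OF l] by auto
    have "y $ i = y $ (\<Sum>m<p. k l m)"
      using LapD_null_imp_const_on_grp[OF l p(1) y _ p(2) grp_start[OF l p(1)]] Ly[OF p(1)] z0[OF p(1)] by simp
    then show "y $ i = (B l *\<^sub>v w) $ i" using B_mult_vec[OF l w p] p(1) by (simp add: w_def)
  qed (use y in simp)
  then show ?thesis using w by blast
qed

lemma X_mult_ones: "l \<in> {1..M} \<Longrightarrow> X l *\<^sub>v vec (N l) (\<lambda>_. 1) = 0\<^sub>v (N l)"
  using B_mult_ones[of l, symmetric] X_mult_B[of l]
  by (simp add: assoc_mult_mat_vec[symmetric, of _ "N l" "N l" _ "N (Suc l)"])

lemma Bprod_Suc: "1 \<le> l \<Longrightarrow> Bprod N k (Suc l) = Bprod N k l * B l"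
  by (cases l) auto

lemma Cprod_Suc: "1 \<le> l \<Longrightarrow> Cprod N k c (Suc l) = C l * Cprod N k c l"
  by (cases l) auto

lemma Bprod_carrier: "1 \<le> l \<Longrightarrow> Bprod N k l \<in> carrier_mat (N 1) (N l)"
  by (induction l rule: nat_induct_at_least) (auto simp: Bprod_Suc)

lemma Cprod_carrier: "1 \<le> l \<Longrightarrow> Cprod N k c l \<in> carrier_mat (N l) (N 1)"
  by (induction l rule: nat_induct_at_least) (auto simp: Cprod_Suc)

lemma Cprod_mult_Bprod: "1 \<le> l \<Longrightarrow> l \<le> M \<Longrightarrow> Cprod N k c l * Bprod N k l = 1\<^sub>m (N l)"
proof (induction l rule: nat_induct_at_least)
  case (Suc l)
  let ?Bp = "Bprod N k l" and ?Cp = "Cprod N k c l"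
  have l: "l \<in> {1..<M}" using Suc by simp
  have Bp: "?Bp \<in> carrier_mat (N 1) (N l)" and Cp: "?Cp \<in> carrier_mat (N l) (N 1)"
    using Bprod_carrier Cprod_carrier Suc by auto
  have "Cprod N k c (Suc l) * Bprod N k (Suc l) = (C l * ?Cp) * (?Bp * B l)"
    using Suc by (simp add: Bprod_Suc Cprod_Suc)
  also have "\<dots> = C l * (?Cp * (?Bp * B l))"
    using Bp Cp by (intro assoc_mult_mat[of _ "N (Suc l)" "N l" _ "N 1" _ "N (Suc l)"]) auto
  also have "?Cp * (?Bp * B l) = (?Cp * ?Bp) * B l"
    using Bp Cp by (intro assoc_mult_mat[symmetric, of _ "N l" "N 1" _ "N l" _ "N (Suc l)"]) auto
  also have "C l * (\<dots>) = 1\<^sub>m (N (Suc l))" using Suc C_mult_B[OF l] by simp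
  finally show ?case .
qed simp

lemma Lmat_carrier:
  assumes "1 \<le> l"
  shows "Lmat N k adj a c l \<in> carrier_mat (N 1) (N 1)"
  using Bprod_carrier[OF assms] Cprod_carrier[OF assms] by (auto simp: Lmat_def intro!: mult_carrier_mat)

definition tail :: "nat \<Rightarrow> real mat" where
  "tail l = foldr (\<lambda>m T. X m + B m * T * C m) [l..<M] (X M)"

lemma tail_top: "tail M = X M"
  by (simp add: tail_def)

lemma tail_step: "l < M \<Longrightarrow> tail l = X l + B l * tail (Suc l) * C l"
  by (simp add: tail_def upt_conv_Cons)

lemma layer_down_induct[consumes 1, case_names top step]:
  assumes "l \<in> {1..M}" and "P M" and "\<And>l. l \<in> {1..<M} \<Longrightarrow> P (Suc l) \<Longrightarrow> P l"
  shows "P l"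
proof -
  have "l \<le> M" using assms(1) by simp
  then show ?thesis
  proof (induction rule: inc_induct)
    case (step n)
    then show ?case using assms(1,3) by simp
  qed (rule assms(2))
qed

lemma tail_carrier: "l \<in> {1..M} \<Longrightarrow> tail l \<in> carrier_mat (N l) (N l)"
  by (induction rule: layer_down_induct) (auto simp: tail_top tail_step)

lemma block_triangular_tail:
  "l \<in> {1..<M} \<Longrightarrow> block_triangular (N l) (N (Suc l)) (X l) (B l) (C l) (tail (Suc l))"
  by unfold_locales (auto simp: tail_carrier C_mult_B X_mult_B)

lemma sandwich_tail_step:
  assumes l: "l \<in> {1..<M}"
  shows "Bprod N k l * tail l * Cprod N k c l
    = Lmat N k adj a c l + Bprod N k (Suc l) * tail (Suc l) * Cprod N k c (Suc l)"
proof -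
  have Bp: "Bprod N k l \<in> carrier_mat (N 1) (N l)" and Cp: "Cprod N k c l \<in> carrier_mat (N l) (N 1)"
    and T: "tail (Suc l) \<in> carrier_mat (N (Suc l)) (N (Suc l))"
    using Bprod_carrier Cprod_carrier tail_carrier l by auto
  have "Bprod N k l * tail l * Cprod N k c l
      = Bprod N k l * X l * Cprod N k c l + Bprod N k l * (B l * tail (Suc l) * C l) * Cprod N k c l"
  proof -
    have "B l * tail (Suc l) * C l \<in> carrier_mat (N l) (N l)" using T by (auto intro!: mult_carrier_mat)
    then show ?thesis using l tail_step add_mult_distrib_mat_sandwich[OF Bp carrier_mats(3) _ Cp] by simp
  qed
  also have "Bprod N k l * (B l * tail (Suc l) * C l) * Cprod N k c l
      = Bprod N k (Suc l) * tail (Suc l) * Cprod N k c (Suc l)"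
    using l assoc_mult_mat_sandwich[OF Bp carrier_mats(4) T carrier_mats(5) Cp] by (simp add: Bprod_Suc Cprod_Suc)
  finally show ?thesis by (simp add: Lmat_def)
qed

lemma sum_Lmat_eq_sandwich_tail:
  assumes "l \<in> {1..M}"
  shows "mat (N 1) (N 1) (\<lambda>ij. \<Sum>m = l..M. Lmat N k adj a c m $$ ij) = Bprod N k l * tail l * Cprod N k c l"
  using assms
proof (induction rule: layer_down_induct)
  case top
  have "mat (N 1) (N 1) (\<lambda>ij. \<Sum>m = M..M. Lmat N k adj a c m $$ ij) = Lmat N k adj a c M"
    using Lmat_carrier[of M] M2 by (intro eq_matI) auto
  then show ?case by (simp add: Lmat_def tail_top)
next
  case (step l)
  have "{l..M} = insert l {Suc l..M}" using step.hyps by auto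
  then have "mat (N 1) (N 1) (\<lambda>ij. \<Sum>m = l..M. Lmat N k adj a c m $$ ij)
      = Lmat N k adj a c l + mat (N 1) (N 1) (\<lambda>ij. \<Sum>m = Suc l..M. Lmat N k adj a c m $$ ij)"
    using Lmat_carrier[of l] step.hyps by (intro eq_matI) auto
  then show ?case using step.IH sandwich_tail_step[OF step.hyps] by simp
qed

lemma Ltot_eq_tail: "Ltot N k adj a c M = tail 1"
proof -
  have "Ltot N k adj a c M = Bprod N k 1 * tail 1 * Cprod N k c 1"
    unfolding Ltot_def using sum_Lmat_eq_sandwich_tail[of 1] M2 by simp
  then show ?thesis using tail_carrier[of 1] M2 by simp
qed

lemma X_preimage_range_cpx:
  assumes "l \<in> {1..M}" and "y \<in> carrier_vec (N l)" and "z \<in> carrier_vec (N (Suc l))"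
    and "cpx (X l) *\<^sub>v y = cpx (B l) *\<^sub>v z"
  shows "\<exists>w\<in>carrier_vec (N (Suc l)). y = cpx (B l) *\<^sub>v w"
  using range_preimage_of_real[OF carrier_mats(3,4) X_preimage_range[OF assms(1)] assms(2-4)] .

lemma cpx_B_mult_ones:
  assumes "l \<in> {1..M}"
  shows "cpx (B l) *\<^sub>v vec (N (Suc l)) (\<lambda>_. 1) = vec (N l) (\<lambda>_. 1)"
  using cpx_mult_vec[OF carrier_mats(4), of "vec (N (Suc l)) (\<lambda>_. 1)" l] B_mult_ones[OF assms] by simp

lemma cpx_tail_step:
  assumes "l \<in> {1..<M}"
  shows "cpx (tail l) = cpx (X l) + cpx (B l) * cpx (tail (Suc l)) * cpx (C l)"
  using assms tail_step tail_carrier[of "Suc l"] of_real_hom.mat_hom_block[OF carrier_mats(3,4,5)] by simp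

lemma eigenvalue_tail_iff:
  assumes "l \<in> {1..M}" and mu: "\<mu> \<noteq> 0"
  shows "eigenvalue (cpx (tail l)) \<mu> \<longleftrightarrow> (\<exists>m\<in>{l..M}. eigenvalue (cpx (X m)) \<mu>)"
  using assms(1)
proof (induction rule: layer_down_induct)
  case top
  then show ?case by (simp add: tail_top)
next
  case (step l)
  interpret block_triangular "N l" "N (Suc l)" "cpx (X l)" "cpx (B l)" "cpx (C l)" "cpx (tail (Suc l))"
    using of_real_hom.block_triangular_hom[OF block_triangular_tail[OF step.hyps]] .
  have "{l..M} = insert l {Suc l..M}" using step.hyps by auto
  then show ?case using eigenvalue_iff[OF mu] step.IH cpx_tail_step[OF step.hyps] by auto
qed

lemma simple_null_vector_top: "simple_null_vector (cpx (X M)) (vec (N M) (\<lambda>_. 1))"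
proof -
  txt \<open>The top layer is a single group, so the range of B M is spanned by the all-ones vector.\<close>
  let ?one = "vec 1 (\<lambda>_. 1) :: complex vec"
  have M: "M \<in> {1..M}" using M2 by simp
  have BM: "cpx (B M) \<in> carrier_mat (N M) 1" using carrier_mats(4)[of M] Ntop by simp
  have ones: "vec (N M) (\<lambda>_. 1) = cpx (B M) *\<^sub>v ?one" using cpx_B_mult_ones[OF M] Ntop by simp
  have "cpx (X M) *\<^sub>v vec (N M) (\<lambda>_. 1) = 0\<^sub>v (N M)"
    using cpx_mult_vec[OF carrier_mats(3), of "vec (N M) (\<lambda>_. 1)" M] X_mult_ones[OF M]
    by (simp add: of_real_hom.vec_hom_zero)
  moreover have "\<exists>d. y = d \<cdot>\<^sub>v vec (N M) (\<lambda>_. 1)"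
    if y: "y \<in> carrier_vec (N M)" and e: "cpx (X M) *\<^sub>v y = c \<cdot>\<^sub>v vec (N M) (\<lambda>_. 1)" for y c
  proof -
    have "cpx (X M) *\<^sub>v y = cpx (B M) *\<^sub>v (c \<cdot>\<^sub>v ?one)" using e ones mult_mat_vec[OF BM] by simp
    then obtain w where w: "w \<in> carrier_vec 1" "y = cpx (B M) *\<^sub>v w"
      using X_preimage_range_cpx[OF M y, of "c \<cdot>\<^sub>v ?one"] Ntop by auto
    define d where "d = w $ 0"
    have "w = d \<cdot>\<^sub>v ?one" using w(1) by (intro eq_vecI) (auto simp: d_def)
    then have "y = d \<cdot>\<^sub>v vec (N M) (\<lambda>_. 1)" using w(2) ones mult_mat_vec[OF BM] by simp
    then show ?thesis ..
  qed
  ultimately show ?thesis using simple_null_vector_iff[of "cpx (X M)" "N M"] by simp blast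
qed

lemma simple_null_vector_tail:
  assumes "l \<in> {1..M}"
  shows "simple_null_vector (cpx (tail l)) (vec (N l) (\<lambda>_. 1))"
  using assms
proof (induction rule: layer_down_induct)
  case top
  then show ?case using simple_null_vector_top by (simp add: tail_top)
next
  case (step l)
  interpret block_triangular "N l" "N (Suc l)" "cpx (X l)" "cpx (B l)" "cpx (C l)" "cpx (tail (Suc l))"
    using of_real_hom.block_triangular_hom[OF block_triangular_tail[OF step.hyps]] .
  have "simple_null_vector (cpx (tail l)) (cpx (B l) *\<^sub>v vec (N (Suc l)) (\<lambda>_. 1))"
    using simple_null_vector_B_mult_vec[OF _ step.IH] X_preimage_range_cpx step.hyps cpx_tail_step[OF step.hyps]
    by auto
  then show ?case using cpx_B_mult_ones step.hyps by simp
qed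

lemma eigenvalue_Lmat_iff:
  assumes l: "l \<in> {1..M}" and mu: "\<mu> \<noteq> 0"
  shows "eigenvalue (cpx (Lmat N k adj a c l)) \<mu> \<longleftrightarrow> eigenvalue (cpx (X l)) \<mu>"
proof -
  have Bp: "cpx (Bprod N k l) \<in> carrier_mat (N 1) (N l)" and Cp: "cpx (Cprod N k c l) \<in> carrier_mat (N l) (N 1)"
    using Bprod_carrier Cprod_carrier l by auto
  have "cpx (Lmat N k adj a c l) = cpx (Bprod N k l) * cpx (X l) * cpx (Cprod N k c l)"
    using Bprod_carrier[of l] Cprod_carrier[of l] l
      cpx_mult[of "Bprod N k l * X l" "N 1" "N l" "Cprod N k c l" "N 1"]
      cpx_mult[of "Bprod N k l" "N 1" "N l" "X l" "N l"]
    by (simp add: Lmat_def)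
  moreover have "cpx (Cprod N k c l) * cpx (Bprod N k l) = 1\<^sub>m (N l)"
    using Bprod_carrier[of l] Cprod_carrier[of l] Cprod_mult_Bprod[of l] l
    by (simp add: cpx_mult[symmetric, of _ "N l" "N 1"] of_real_hom.mat_hom_one)
  ultimately show ?thesis using eigenvalue_sandwich_iff[OF Bp Cp _ _ mu] by simp
qed

end

theorem theorem1:
  fixes M :: nat and N :: "nat \<Rightarrow> nat" and k :: "nat \<Rightarrow> nat \<Rightarrow> nat"
    and adj :: "nat \<Rightarrow> nat \<Rightarrow> nat \<Rightarrow> bool" and a :: "nat \<Rightarrow> real"
    and c :: "nat \<Rightarrow> nat \<Rightarrow> real"
  assumes M2: "M \<ge> 2"
    and Npos: "\<forall>l\<in>{1..M}. N l > 0"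
    and Ntop: "N (Suc M) = 1"
    and kpos: "\<forall>l\<in>{1..M}. \<forall>p<N (Suc l). k l p \<ge> 1"
    and ksum: "\<forall>l\<in>{1..M}. (\<Sum>p<N (Suc l). k l p) = N l"
    and adj_sym: "\<forall>l\<in>{1..M}. \<forall>i j. adj l i j \<longrightarrow> adj l j i"
    and adj_irrefl: "\<forall>l\<in>{1..M}. \<forall>i. \<not> adj l i i"
    and adj_grp: "\<forall>l\<in>{1..M}. \<forall>i j. adj l i j \<longrightarrow> (\<exists>p<N (Suc l). i \<in> grp k l p \<and> j \<in> grp k l p)"
    and adj_conn: "\<forall>l\<in>{1..M}. \<forall>p<N (Suc l). \<forall>i\<in>grp k l p. \<forall>j\<in>grp k l p.
        (i, j) \<in> {(x, y). x \<in> grp k l p \<and> y \<in> grp k l p \<and> adj l x y}\<^sup>*"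
    and apos: "\<forall>i<N 1. a i > 0"
    and c_nonneg: "\<forall>l\<in>{1..<M}. \<forall>i<N l. c l i \<ge> 0"
    and c_sum: "\<forall>l\<in>{1..<M}. \<forall>p<N (Suc l). (\<Sum>i\<in>grp k l p. c l i) = 1"
  shows "eigs (Ltot N k adj a c M)
           = {0} \<union> (\<Union>l\<in>{1..M}. eigs (Lmat N k adj a c l) - {0})
         \<and> alg_mult (Ltot N k adj a c M) 0 = 1"
proof -
  interpret hierarchy M N k adj a c
    using M2 Ntop kpos ksum adj_sym adj_irrefl adj_grp adj_conn apos c_sum by unfold_locales
  have top: "1 \<in> {1..M}" and N1: "0 < N 1" using M2 Npos by auto
  have null: "simple_null_vector (cpx (tail 1)) (vec (N 1) (\<lambda>_. 1))"
    by (rule simple_null_vector_tail[OF top])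
  have T: "cpx (tail 1) \<in> carrier_mat (N 1) (N 1)" using tail_carrier[OF top] by simp
  have "eigenvalue (cpx (tail 1)) 0"
    using eigenvalue_0_if_simple_null_vector[OF T null] N1 by (auto simp: vec_eq_iff)
  moreover have "eigenvalue (cpx (tail 1)) \<mu> \<longleftrightarrow> (\<exists>l\<in>{1..M}. eigenvalue (cpx (Lmat N k adj a c l)) \<mu>)"
    if "\<mu> \<noteq> 0" for \<mu>
    using eigenvalue_tail_iff[OF top that] eigenvalue_Lmat_iff[OF _ that] by auto
  ultimately have "eigs (Ltot N k adj a c M) = {0} \<union> (\<Union>l\<in>{1..M}. eigs (Lmat N k adj a c l) - {0})"
    unfolding eigs_def Ltot_eq_tail by auto (metis atLeastAtMost_iff)
  moreover have "alg_mult (Ltot N k adj a c M) 0 = 1"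
    unfolding alg_mult_def Ltot_eq_tail
    using order_char_poly_zero_eq_1[OF T null _ N1] N1 by simp
  ultimately show ?thesis ..
qed

end
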